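(* Let $\kappa\ge1$, $n\ge1$ be integers and $0<\epsilon<1$. Let $\mathcal{C}=\{q\in\mathbb{R}^{2^\kappa}: q_i\ge0\ \forall i,\ \sum_{i=0}^{2^\kappa-1}q_i=1\}$. If $q\in\mathcal{C}$ is a local minimizer of $q\mapsto l(n,\epsilon,q)$ on $\mathcal{C}$, then $q_0=0$.
   Context: $W=\mathbb{F}_2^\kappa$; $\nu(i)\in W$ is the binary expansion of $i\in\{0,\dots,2^\kappa-1\}$; vectors $q\in\mathbb{R}^{2^\kappa}$ are indexed $q_0,\dots,q_{2^\kappa-1}$. For a subspace $S\subseteq W$, $\zeta(S,q)=\sum_{i:\nu(i)\in S}q_i$; $\Xi(W,d)$ is the set of $d$-dimensional subspaces of $W$. For real $q$, the (continuous) expected equivocation loss is $l(n,\epsilon,q)=n(1-\epsilon)-\kappa+\sum_{\delta=1}^{\kappa}K_\delta\sum_{S\in\Xi(W,\kappa-\delta)}\epsilon^{n(1-\zeta(S,q))}$, with $K_\delta=\prod_{i=1}^{\delta-1}(1-2^i)$. (When $q$ is the column-distribution vector of a $\kappa\times n$ generator matrix $G$, i.e. $q_i$ is the fraction of columns of $G$ equal to $\nu(i)$, this is the expected equivocation loss of the corresponding coset code over a binary erasure channel with erasure probability $\epsilon$.) A local minimizer of $f$ on $\mathcal{C}$ is a point $q\in\mathcal{C}$ with $f(q)\le f(q')$ for all $q'\in\mathcal{C}$ in some neighborhood of $q$. *)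

theory Defs
  imports "HOL-Analysis.Analysis"
begin

text \<open>Elements of W = F_2^kappa are represented as functions nat => bool
  (coordinate j is the j-th bit), vanishing at coordinates j >= kappa.\<close>

definition Wsp :: "nat \<Rightarrow> (nat \<Rightarrow> bool) set" where
  "Wsp \<kappa> = {v. \<forall>j. v j \<longrightarrow> j < \<kappa>}"

definition nu :: "nat \<Rightarrow> nat \<Rightarrow> (nat \<Rightarrow> bool)" where
  "nu \<kappa> i = (\<lambda>j. j < \<kappa> \<and> bit i j)"

definition vzero :: "nat \<Rightarrow> bool" where
  "vzero = (\<lambda>j. False)"

definition vadd :: "(nat \<Rightarrow> bool) \<Rightarrow> (nat \<Rightarrow> bool) \<Rightarrow> (nat \<Rightarrow> bool)" where
  "vadd u v = (\<lambda>j. u j \<noteq> v j)"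

definition vsum :: "(nat \<Rightarrow> bool) set \<Rightarrow> (nat \<Rightarrow> bool)" where
  "vsum T = (\<lambda>j. odd (card {v\<in>T. v j}))"

definition is_subspace :: "nat \<Rightarrow> (nat \<Rightarrow> bool) set \<Rightarrow> bool" where
  "is_subspace \<kappa> S \<longleftrightarrow> S \<subseteq> Wsp \<kappa> \<and> vzero \<in> S \<and> (\<forall>u\<in>S. \<forall>v\<in>S. vadd u v \<in> S)"

text \<open>Xi kappa d: the d-dimensional subspaces of W, i.e. subspaces having a basis
  B of cardinality d (every element is a unique F_2-combination of B).\<close>
definition Xi :: "nat \<Rightarrow> nat \<Rightarrow> (nat \<Rightarrow> bool) set set" where
  "Xi \<kappa> d = {S. is_subspace \<kappa> S \<and>
     (\<exists>B. B \<subseteq> S \<and> finite B \<and> card B = d \<and> bij_betw vsum (Pow B) S)}"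

definition zeta :: "nat \<Rightarrow> (nat \<Rightarrow> bool) set \<Rightarrow> (nat \<Rightarrow> real) \<Rightarrow> real" where
  "zeta \<kappa> S q = (\<Sum>i\<in>{i. i < 2^\<kappa> \<and> nu \<kappa> i \<in> S}. q i)"

definition Kc :: "nat \<Rightarrow> real" where
  "Kc \<delta> = (\<Prod>i\<in>{1..<\<delta>}. 1 - 2^i)"

definition loss :: "nat \<Rightarrow> nat \<Rightarrow> real \<Rightarrow> (nat \<Rightarrow> real) \<Rightarrow> real" where
  "loss \<kappa> n \<epsilon> q = real n * (1 - \<epsilon>) - real \<kappa> +
     (\<Sum>\<delta>\<in>{1..\<kappa>}. Kc \<delta> * (\<Sum>S\<in>Xi \<kappa> (\<kappa> - \<delta>). \<epsilon> powr (real n * (1 - zeta \<kappa> S q))))"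

text \<open>The simplex C in R^(2^kappa); vectors are functions nat => real, only the
  coordinates 0..2^kappa-1 matter.\<close>
definition simplexC :: "nat \<Rightarrow> (nat \<Rightarrow> real) set" where
  "simplexC \<kappa> = {q. (\<forall>i<2^\<kappa>. q i \<ge> 0) \<and> (\<Sum>i<2^\<kappa>. q i) = 1}"

text \<open>Local minimizer on C w.r.t. the topology of R^(2^kappa) (sup-distance on
  the coordinates 0..2^kappa-1).\<close>
definition local_min_on :: "nat \<Rightarrow> ((nat \<Rightarrow> real) \<Rightarrow> real) \<Rightarrow> (nat \<Rightarrow> real) set \<Rightarrow> (nat \<Rightarrow> real) \<Rightarrow> bool" where
  "local_min_on \<kappa> f C q \<longleftrightarrow> q \<in> C \<and>
     (\<exists>r>0. \<forall>q'\<in>C. (\<forall>i<2^\<kappa>. \<bar>q' i - q i\<bar> < r) \<longrightarrow> f q \<le> f q')"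

end

theory Submission
  imports Defs
begin

text \<open>Moving a small amount t of mass from q(0) (the zero vector, which lies in every
  subspace) to a coordinate q(j) with j \<noteq> 0 multiplies the term of every subspace S
  avoiding nu(j) by eps^(n t) < 1 and leaves the other terms unchanged, so it lowers the
  loss by (1 - eps^(n t)) times the weighted sum of eps^(n (1 - zeta(S))) over those S.
  This sum is positive: expanding eps^(n (1 - zeta(S))) as a sum, over sets U of
  coordinates, of nonnegative weights w(U) turns it into the sum of w(U) c(U), where c(U)
  is the sum of the coefficients K over the subspaces containing nu(U) and avoiding nu(j).
  A Moebius-type identity in the subspace lattice of F_2^kappa shows c(U) \<in> {0, 1} and
  c({}) = 1, while w({}) > 0. Hence at a local minimizer no mass can sit on q(0).\<close>

lemma vadd_self [simp]: "vadd u u = vzero"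
  unfolding vadd_def vzero_def by auto

lemma vadd_vzero [simp]: "vadd u vzero = u" "vadd vzero u = u"
  unfolding vadd_def vzero_def by auto

lemma vadd_commute: "vadd u v = vadd v u"
  unfolding vadd_def by auto

lemma vadd_left_cancel [simp]: "vadd u v = vadd u w \<longleftrightarrow> v = w"
  unfolding vadd_def by (auto simp: fun_eq_iff)

lemma vadd_eq_vzero_iff: "vadd u v = vzero \<longleftrightarrow> u = v"
  unfolding vadd_def vzero_def by (auto simp: fun_eq_iff)

lemma vadd_in_Wsp: "u \<in> Wsp k \<Longrightarrow> v \<in> Wsp k \<Longrightarrow> vadd u v \<in> Wsp k"
  unfolding vadd_def Wsp_def by auto

lemma vzero_in_Wsp: "vzero \<in> Wsp k"
  unfolding vzero_def Wsp_def by auto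

lemma nu_in_Wsp: "nu k i \<in> Wsp k"
  unfolding nu_def Wsp_def by auto

lemma nu_0: "nu k 0 = vzero"
  unfolding nu_def vzero_def by simp

lemma nu_eq_vzero_iff:
  assumes "j < 2 ^ k"
  shows "nu k j = vzero \<longleftrightarrow> j = 0"
proof
  assume "nu k j = vzero"
  then have low: "\<not> bit j m" if "m < k" for m
    using that unfolding nu_def vzero_def by meson
  have high: "\<not> bit j m" if "k \<le> m" for m
  proof -
    have "j < 2 ^ m" using assms that by (meson order_less_le_trans one_le_numeral power_increasing)
    then show ?thesis by (simp add: bit_iff_odd)
  qed
  have "\<not> bit j m" for m
    using low high by (cases "m < k") auto
  then show "j = 0" by (simp add: bit_eq_iff)
qed (simp add: nu_0)

lemma Wsp_eq_image_Pow: "Wsp k = (\<lambda>A j. j \<in> A) ` Pow {..<k}"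
proof
  show "Wsp k \<subseteq> (\<lambda>A j. j \<in> A) ` Pow {..<k}"
  proof
    fix v assume "v \<in> Wsp k"
    then have "v = (\<lambda>j. j \<in> {j. v j})" "{j. v j} \<in> Pow {..<k}" unfolding Wsp_def by auto
    then show "v \<in> (\<lambda>A j. j \<in> A) ` Pow {..<k}" by blast
  qed
qed (auto simp: Wsp_def)

lemma finite_Wsp: "finite (Wsp k)"
  unfolding Wsp_eq_image_Pow by simp

lemma card_Wsp: "card (Wsp k) = 2 ^ k"
proof -
  have "inj_on (\<lambda>A j. j \<in> A) (Pow {..<k})"
    by (rule inj_onI) (metis Collect_mem_eq)
  then show ?thesis unfolding Wsp_eq_image_Pow by (simp add: card_image card_Pow)
qed

lemma subspace_Wsp: "is_subspace k (Wsp k)"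
  unfolding is_subspace_def using vzero_in_Wsp vadd_in_Wsp by auto

lemma subspace_vzero: "is_subspace k {vzero}"
  unfolding is_subspace_def using vzero_in_Wsp by auto

lemma finite_subspace: "is_subspace k S \<Longrightarrow> finite S"
  unfolding is_subspace_def using finite_Wsp finite_subset by blast

lemma finite_subspaces: "finite {S. is_subspace k S \<and> P S}"
  by (rule finite_subset[of _ "Pow (Wsp k)"]) (auto simp: is_subspace_def finite_Wsp)

lemma vsum_empty: "vsum {} = vzero"
  unfolding vsum_def vzero_def by auto

lemma vsum_insert:
  assumes "finite C" "z \<notin> C"
  shows "vsum (insert z C) = vadd z (vsum C)"
  unfolding vsum_def vadd_def
proof
  fix j
  show "odd (card {v \<in> insert z C. v j}) = (z j \<noteq> odd (card {v \<in> C. v j}))"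
  proof (cases "z j")
    case True
    then have "{v \<in> insert z C. v j} = insert z {v \<in> C. v j}" by auto
    then show ?thesis using True assms by simp
  next
    case False
    then have "{v \<in> insert z C. v j} = {v \<in> C. v j}" by auto
    then show ?thesis using False by simp
  qed
qed

definition adjoin :: "(nat \<Rightarrow> bool) set \<Rightarrow> (nat \<Rightarrow> bool) \<Rightarrow> (nat \<Rightarrow> bool) set" where
  "adjoin T z = T \<union> vadd z ` T"

lemma subset_adjoin: "T \<subseteq> adjoin T z"
  unfolding adjoin_def by auto

lemma in_adjoin: "vzero \<in> T \<Longrightarrow> z \<in> adjoin T z"
  unfolding adjoin_def by (metis UnI2 image_eqI vadd_vzero(1))

lemma adjoin_subset: "is_subspace k S \<Longrightarrow> T \<subseteq> S \<Longrightarrow> z \<in> S \<Longrightarrow> adjoin T z \<subseteq> S"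
  unfolding adjoin_def is_subspace_def by auto

lemma subspace_adjoin:
  assumes T: "is_subspace k T" and z: "z \<in> Wsp k"
  shows "is_subspace k (adjoin T z)"
  unfolding is_subspace_def adjoin_def
proof (intro conjI ballI)
  show "T \<union> vadd z ` T \<subseteq> Wsp k" using T z vadd_in_Wsp unfolding is_subspace_def by auto
  show "vzero \<in> T \<union> vadd z ` T" using T unfolding is_subspace_def by auto
  have closed: "vadd a b \<in> T" if "a \<in> T" "b \<in> T" for a b
    using T that unfolding is_subspace_def by auto
  have "vadd a b \<in> T" "vadd a (vadd z b) \<in> vadd z ` T" "vadd (vadd z a) b \<in> vadd z ` T"
    "vadd (vadd z a) (vadd z b) \<in> T" if "a \<in> T" "b \<in> T" for a b
  proof -
    have "vadd a (vadd z b) = vadd z (vadd a b)" "vadd (vadd z a) b = vadd z (vadd a b)"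
      "vadd (vadd z a) (vadd z b) = vadd a b"
      unfolding vadd_def by auto
    then show "vadd a b \<in> T" "vadd a (vadd z b) \<in> vadd z ` T" "vadd (vadd z a) b \<in> vadd z ` T"
      "vadd (vadd z a) (vadd z b) \<in> T"
      using closed[OF that] by auto
  qed
  then show "vadd u v \<in> T \<union> vadd z ` T" if "u \<in> T \<union> vadd z ` T" "v \<in> T \<union> vadd z ` T" for u v
    using that by blast
qed

lemma card_adjoin:
  assumes T: "is_subspace k T" and z: "z \<notin> T"
  shows "card (adjoin T z) = 2 * card T"
proof -
  have disj: "T \<inter> vadd z ` T = {}"
  proof (rule ccontr)
    assume "T \<inter> vadd z ` T \<noteq> {}"
    then obtain a b where "a \<in> T" "b \<in> T" "a = vadd z b" by auto
    then have "z = vadd a b" "vadd a b \<in> T"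
      using T unfolding vadd_def is_subspace_def by auto
    then show False using z by simp
  qed
  have "inj_on (vadd z) T" by (rule inj_onI) simp
  then show ?thesis
    using card_Un_disjoint[OF finite_subspace[OF T] _ disj] finite_subspace[OF T]
    unfolding adjoin_def by (simp add: card_image)
qed

definition has_basis :: "(nat \<Rightarrow> bool) set \<Rightarrow> bool" where
  "has_basis S \<longleftrightarrow> (\<exists>B. B \<subseteq> S \<and> finite B \<and> bij_betw vsum (Pow B) S)"

lemma has_basis_adjoin:
  assumes T: "is_subspace k T" and z: "z \<in> Wsp k" "z \<notin> T" and b: "has_basis T"
  shows "has_basis (adjoin T z)"
proof -
  obtain B where B: "B \<subseteq> T" "finite B" "bij_betw vsum (Pow B) T"
    using b has_basis_def by auto
  have zB: "z \<notin> B" using B z by auto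
  have "vsum (insert z C) = vadd z (vsum C)" if "C \<in> Pow B" for C
    using vsum_insert B zB that by (meson PowD finite_subset subsetD)
  then have "vsum ` insert z ` Pow B = vadd z ` vsum ` Pow B"
    by (auto simp: image_image image_iff)
  then have img: "vsum ` Pow (insert z B) = adjoin T z"
    using B(3) unfolding Pow_insert adjoin_def bij_betw_def by (simp add: image_Un)
  have "card (Pow (insert z B)) = 2 * card (Pow B)"
    using B(2) zB by (simp add: card_Pow)
  also have "\<dots> = card (adjoin T z)"
    using card_adjoin[OF T z(2)] B(3) bij_betw_same_card by metis
  finally have "inj_on vsum (Pow (insert z B))"
    using B(2) img by (intro eq_card_imp_inj_on) auto
  moreover have "insert z B \<subseteq> adjoin T z"
    using B(1) subset_adjoin[of T z] in_adjoin[of T z] T unfolding is_subspace_def by blast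
  ultimately show ?thesis
    unfolding has_basis_def bij_betw_def using B(2) img by (intro exI[of _ "insert z B"]) auto
qed

lemma subspace_has_basis:
  assumes S: "is_subspace k S"
  shows "has_basis S"
proof -
  let ?M = "{T. is_subspace k T \<and> T \<subseteq> S \<and> has_basis T}"
  have "bij_betw vsum (Pow {}) {vzero}"
    by (simp add: bij_betw_def vsum_empty)
  then have "{vzero} \<in> ?M"
    using S subspace_vzero unfolding has_basis_def is_subspace_def by blast
  moreover have "card T < Suc (card S)" if "T \<in> ?M" for T
    using that card_mono[OF finite_subspace[OF S]] by (simp add: less_Suc_eq_le)
  ultimately obtain T where T: "T \<in> ?M" and max: "\<And>T'. T' \<in> ?M \<Longrightarrow> card T' \<le> card T"
    using ex_has_greatest_nat[of "\<lambda>T. T \<in> ?M" "{vzero}" card "Suc (card S)"] by blast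
  show ?thesis
  proof (cases "T = S")
    case False
    then obtain w where w: "w \<in> S" "w \<notin> T" using T by auto
    have TS: "is_subspace k T" "T \<subseteq> S" "has_basis T" and wW: "w \<in> Wsp k"
      using T w S unfolding is_subspace_def by auto
    have "adjoin T w \<in> ?M"
      using subspace_adjoin[OF TS(1) wW] adjoin_subset[OF S TS(2) w(1)]
        has_basis_adjoin[OF TS(1) wW w(2) TS(3)] by blast
    then have "card (adjoin T w) \<le> card T" by (rule max)
    moreover have "card T > 0"
      using TS(1) finite_subspace unfolding is_subspace_def by (metis card_gt_0_iff empty_iff)
    ultimately show ?thesis using card_adjoin[OF TS(1) w(2)] by simp
  qed (use T in blast)
qed

definition sdim :: "(nat \<Rightarrow> bool) set \<Rightarrow> nat" where
  "sdim S = (THE d. card S = 2 ^ d)"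

lemma sdim_eqI: "card S = 2 ^ d \<Longrightarrow> sdim S = d"
  unfolding sdim_def by (rule the_equality) (auto dest: power_inject_exp[THEN iffD1, rotated])

lemma card_subspace: "is_subspace k S \<Longrightarrow> card S = 2 ^ sdim S"
  using subspace_has_basis sdim_eqI unfolding has_basis_def
  by (metis bij_betw_same_card card_Pow)

lemma sdim_adjoin:
  "is_subspace k T \<Longrightarrow> z \<notin> T \<Longrightarrow> sdim (adjoin T z) = Suc (sdim T)"
  using card_adjoin card_subspace sdim_eqI by (metis power_Suc)

lemma sdim_le:
  assumes S: "is_subspace k S"
  shows "sdim S \<le> k"
proof -
  have "card S \<le> card (Wsp k)"
    using S finite_Wsp unfolding is_subspace_def by (simp add: card_mono)
  then show ?thesis using card_subspace[OF S] card_Wsp by simp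
qed

lemma sdim_eq_iff:
  assumes S: "is_subspace k S"
  shows "sdim S = k \<longleftrightarrow> S = Wsp k"
proof
  assume "sdim S = k"
  then have "card S = card (Wsp k)" using card_subspace[OF S] card_Wsp by simp
  then show "S = Wsp k"
    using S finite_Wsp unfolding is_subspace_def by (simp add: card_subset_eq)
qed (simp add: card_Wsp sdim_eqI)

lemma Xi_eq: "Xi k d = {S. is_subspace k S \<and> card S = 2 ^ d}"
proof safe
  fix S assume "S \<in> Xi k d"
  then obtain B where "is_subspace k S" "finite B" "card B = d" "bij_betw vsum (Pow B) S"
    unfolding Xi_def by blast
  then show "is_subspace k S" "card S = 2 ^ d"
    by (auto dest: bij_betw_same_card simp: card_Pow)
next
  fix S assume S: "is_subspace k S" "card S = 2 ^ d"
  obtain B where B: "B \<subseteq> S" "finite B" "bij_betw vsum (Pow B) S"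
    using subspace_has_basis[OF S(1)] has_basis_def by auto
  then have "2 ^ card B = (2::nat) ^ d"
    using bij_betw_same_card[OF B(3)] S(2) by (simp add: card_Pow)
  then have "card B = d" by simp
  then show "S \<in> Xi k d" unfolding Xi_def using S B by blast
qed

definition proper_subspaces :: "nat \<Rightarrow> (nat \<Rightarrow> bool) set set" where
  "proper_subspaces k = {S. is_subspace k S \<and> S \<noteq> Wsp k}"

lemma finite_proper_subspaces: "finite (proper_subspaces k)"
  unfolding proper_subspaces_def by (rule finite_subspaces)

lemma sum_Kc_Xi_eq_sum_proper_subspaces:
  "(\<Sum>\<delta>\<in>{1..k}. Kc \<delta> * (\<Sum>S\<in>Xi k (k - \<delta>). h S)) = (\<Sum>S\<in>proper_subspaces k. Kc (k - sdim S) * h S)"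
proof -
  have codim: "k - sdim S = \<delta>" if "\<delta> \<in> {1..k}" "S \<in> Xi k (k - \<delta>)" for \<delta> S
    using that by (auto simp: Xi_eq sdim_eqI)
  have "(\<Sum>\<delta>\<in>{1..k}. Kc \<delta> * (\<Sum>S\<in>Xi k (k - \<delta>). h S))
      = (\<Sum>\<delta>\<in>{1..k}. \<Sum>S\<in>Xi k (k - \<delta>). Kc (k - sdim S) * h S)"
    using codim by (simp add: sum_distrib_left)
  also have "\<dots> = (\<Sum>S\<in>(\<Union>\<delta>\<in>{1..k}. Xi k (k - \<delta>)). Kc (k - sdim S) * h S)"
    by (rule sum.UNION_disjoint[symmetric]) (auto simp: Xi_eq intro: finite_subspaces)
  also have "(\<Union>\<delta>\<in>{1..k}. Xi k (k - \<delta>)) = proper_subspaces k"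
  proof safe
    fix S \<delta> assume "\<delta> \<in> {1..k}" "S \<in> Xi k (k - \<delta>)"
    then show "S \<in> proper_subspaces k"
      unfolding proper_subspaces_def Xi_eq using sdim_eq_iff sdim_eqI by fastforce
  next
    fix S assume "S \<in> proper_subspaces k"
    then have S: "is_subspace k S" "S \<noteq> Wsp k" unfolding proper_subspaces_def by auto
    then have "sdim S < k" using sdim_le sdim_eq_iff le_neq_implies_less by blast
    then have "k - sdim S \<in> {1..k}" "S \<in> Xi k (k - (k - sdim S))"
      using S card_subspace unfolding Xi_eq by auto
    then show "S \<in> (\<Union>\<delta>\<in>{1..k}. Xi k (k - \<delta>))" by blast
  qed
  finally show ?thesis .
qed

lemma Kc_Suc: "1 \<le> d \<Longrightarrow> Kc (Suc d) = Kc d * (1 - 2 ^ d)"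
  unfolding Kc_def by (simp add: prod.atLeastLessThan_Suc)

definition sumset :: "(nat \<Rightarrow> bool) set \<Rightarrow> (nat \<Rightarrow> bool) set \<Rightarrow> (nat \<Rightarrow> bool) set" where
  "sumset T V = (\<lambda>(t, a). vadd t a) ` (T \<times> V)"

lemma sumset_commute: "sumset T V = sumset V T"
proof -
  have "sumset A B \<subseteq> sumset B A" for A B
  proof
    fix x assume "x \<in> sumset A B"
    then obtain a b where "a \<in> A" "b \<in> B" "x = vadd b a"
      unfolding sumset_def by (auto simp: vadd_commute)
    then show "x \<in> sumset B A" unfolding sumset_def by auto
  qed
  then show ?thesis by blast
qed

lemma subset_sumset:
  assumes "vzero \<in> V"
  shows "T \<subseteq> sumset T V"
proof
  fix t assume "t \<in> T"
  then have "vadd t vzero \<in> sumset T V"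
    unfolding sumset_def using assms by (intro image_eqI[where x = "(t, vzero)"]) auto
  then show "t \<in> sumset T V" by (simp only: vadd_vzero)
qed

lemma sumset_subset_Wsp: "T \<subseteq> Wsp k \<Longrightarrow> V \<subseteq> Wsp k \<Longrightarrow> sumset T V \<subseteq> Wsp k"
  unfolding sumset_def by (auto intro!: vadd_in_Wsp)

lemma card_sumset:
  assumes T: "is_subspace k T" and V: "is_subspace k V" and TV: "T \<inter> V = {vzero}"
  shows "card (sumset T V) = card T * card V"
proof -
  have "inj_on (\<lambda>(t, a). vadd t a) (T \<times> V)"
  proof (rule inj_onI, clarify)
    fix t a t' a' assume h: "t \<in> T" "a \<in> V" "t' \<in> T" "a' \<in> V" "vadd t a = vadd t' a'"
    have "vadd t t' = vadd a a'" using h(5) unfolding vadd_def by (auto simp: fun_eq_iff)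
    moreover have "vadd t t' \<in> T" "vadd a a' \<in> V" using h T V unfolding is_subspace_def by auto
    ultimately have "vadd t t' = vzero" "vadd a a' = vzero" using TV by auto
    then show "t = t' \<and> a = a'" by (simp add: vadd_eq_vzero_iff)
  qed
  then show ?thesis unfolding sumset_def
    using finite_subspace[OF T] finite_subspace[OF V] by (simp add: card_image card_cartesian_product)
qed

lemma vadd_notin_sumset:
  assumes V: "is_subspace k V" and a: "a \<in> V" and w: "w \<notin> sumset T V"
  shows "vadd w a \<notin> sumset T V"
proof
  assume "vadd w a \<in> sumset T V"
  then obtain t b where "t \<in> T" "b \<in> V" "vadd w a = vadd t b" unfolding sumset_def by auto
  then have "w = vadd t (vadd a b)" "vadd a b \<in> V"
    using V a unfolding vadd_def is_subspace_def by (auto simp: fun_eq_iff)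
  then show False using w \<open>t \<in> T\<close> unfolding sumset_def by auto
qed

lemma adjoin_inter_eq_vzero:
  assumes TV: "T \<inter> V = {vzero}" and w: "w \<notin> sumset T V"
  shows "adjoin T w \<inter> V = {vzero}"
proof -
  have "vadd w t \<notin> V" if "t \<in> T" for t
  proof
    assume "vadd w t \<in> V"
    then have "vadd t (vadd w t) \<in> sumset T V" using that unfolding sumset_def by auto
    moreover have "vadd t (vadd w t) = w" unfolding vadd_def by auto
    ultimately show False using w by simp
  qed
  then show ?thesis using TV unfolding adjoin_def by auto
qed

definition avoiding :: "nat \<Rightarrow> (nat \<Rightarrow> bool) set \<Rightarrow> (nat \<Rightarrow> bool) set \<Rightarrow> (nat \<Rightarrow> bool) set set" where
  "avoiding k T V = {S. is_subspace k S \<and> T \<subseteq> S \<and> S \<inter> V = {vzero}}"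

lemma finite_avoiding: "finite (avoiding k T V)"
  unfolding avoiding_def by (rule finite_subspaces)

lemma avoiding_eq_singleton:
  assumes T: "is_subspace k T" and TV: "T \<inter> V = {vzero}" and full: "sumset T V = Wsp k"
  shows "avoiding k T V = {T}"
proof -
  have "S \<subseteq> T" if S: "S \<in> avoiding k T V" for S
  proof
    fix s assume s: "s \<in> S"
    then have "s \<in> sumset T V" using full S unfolding avoiding_def is_subspace_def by auto
    then obtain t a where ta: "t \<in> T" "a \<in> V" "s = vadd t a" unfolding sumset_def by auto
    have S': "is_subspace k S" "T \<subseteq> S" "S \<inter> V = {vzero}" using S unfolding avoiding_def by auto
    have "a = vadd t s" using ta(3) unfolding vadd_def by auto
    then have "a \<in> S \<inter> V" using S' s ta unfolding is_subspace_def by blast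
    then have "a = vzero" using S' by blast
    then show "s \<in> T" using ta by simp
  qed
  then show ?thesis using T TV unfolding avoiding_def by auto
qed

lemma avoiding_antimono:
  assumes "T \<subseteq> T'" "V \<subseteq> V'" "vzero \<in> V"
  shows "avoiding k T' V' \<subseteq> avoiding k T V"
  using assms unfolding avoiding_def is_subspace_def by blast

lemma avoiding_split:
  assumes V: "is_subspace k V"
  shows "avoiding k T V = avoiding k T (adjoin V w) \<union> (\<Union>a\<in>V. avoiding k (adjoin T (vadd w a)) V)"
proof (intro equalityI subsetI)
  fix S assume "S \<in> avoiding k T V"
  then have S: "is_subspace k S" "T \<subseteq> S" "S \<inter> V = {vzero}" unfolding avoiding_def by auto
  show "S \<in> avoiding k T (adjoin V w) \<union> (\<Union>a\<in>V. avoiding k (adjoin T (vadd w a)) V)"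
  proof (cases "S \<inter> adjoin V w = {vzero}")
    case True
    then show ?thesis using S unfolding avoiding_def by blast
  next
    case False
    have "vzero \<in> S \<inter> adjoin V w"
      using S V subset_adjoin[of V w] unfolding is_subspace_def by blast
    then obtain s where s: "s \<in> S" "s \<in> adjoin V w" "s \<noteq> vzero" using False by blast
    then have "s \<notin> V" using S(3) by blast
    then obtain a where a: "a \<in> V" "s = vadd w a" using s(2) unfolding adjoin_def by blast
    have "adjoin T (vadd w a) \<subseteq> S" using adjoin_subset[OF S(1,2)] s(1) a(2) by blast
    then have "S \<in> avoiding k (adjoin T (vadd w a)) V" using S unfolding avoiding_def by blast
    then show ?thesis using a(1) by blast
  qed
next
  have V0: "vzero \<in> V" using V unfolding is_subspace_def by blast
  fix S assume "S \<in> avoiding k T (adjoin V w) \<union> (\<Union>a\<in>V. avoiding k (adjoin T (vadd w a)) V)"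
  then show "S \<in> avoiding k T V"
    using avoiding_antimono[OF order_refl subset_adjoin V0] avoiding_antimono[OF subset_adjoin order_refl V0]
    by blast
qed

lemma avoiding_adjoin_disjoint:
  assumes "vzero \<in> T" "a \<in> V" "w \<notin> V"
  shows "avoiding k T (adjoin V w) \<inter> avoiding k (adjoin T (vadd w a)) V = {}"
proof -
  have "vadd w a \<in> adjoin V w" "vadd w a \<noteq> vzero"
    using assms unfolding adjoin_def by (auto simp: vadd_eq_vzero_iff)
  moreover have "vadd w a \<in> S" if "S \<in> avoiding k (adjoin T (vadd w a)) V" for S
    using that in_adjoin[OF assms(1)] unfolding avoiding_def by blast
  ultimately show ?thesis unfolding avoiding_def by blast
qed

lemma avoiding_adjoin_pairwise_disjoint:
  assumes V: "is_subspace k V" and "vzero \<in> T" "a \<in> V" "b \<in> V" "a \<noteq> b"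
  shows "avoiding k (adjoin T (vadd w a)) V \<inter> avoiding k (adjoin T (vadd w b)) V = {}"
proof (intro equalityI subsetI)
  fix S assume S: "S \<in> avoiding k (adjoin T (vadd w a)) V \<inter> avoiding k (adjoin T (vadd w b)) V"
  then have "vadd w a \<in> S" "vadd w b \<in> S" "is_subspace k S" "S \<inter> V = {vzero}"
    using in_adjoin[OF assms(2)] unfolding avoiding_def by blast+
  moreover have "vadd (vadd w a) (vadd w b) = vadd a b" unfolding vadd_def by auto
  ultimately have "vadd a b \<in> S \<inter> V" using V assms(3,4) unfolding is_subspace_def by (metis IntI)
  then show "S \<in> {}" using \<open>S \<inter> V = {vzero}\<close> \<open>a \<noteq> b\<close> by (auto simp: vadd_eq_vzero_iff)
qed simp

text \<open>The Moebius-type identity: induction on the codimension of the direct sum of T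
  and V. If it is not everything, pick w outside; a subspace containing T and meeting V
  trivially either meets V + w trivially as well, or contains T + (w + a) for exactly
  one a in V. The recurrence K(d + 1) + 2^d K(d) = K(d) closes the induction.\<close>

lemma sum_Kc_avoiding:
  assumes "is_subspace k T" "is_subspace k V" "T \<inter> V = {vzero}" "card V = 2 ^ d" "1 \<le> d"
  shows "(\<Sum>S\<in>avoiding k T V. Kc (k - sdim S)) = Kc d"
  using assms
proof (induction "k - sdim T - d" arbitrary: T V d rule: less_induct)
  case less
  note T = less.prems(1) and V = less.prems(2) and TV = less.prems(3)
  have T0: "vzero \<in> T" and V0: "vzero \<in> V" and VW: "V \<subseteq> Wsp k"
    using T V unfolding is_subspace_def by auto
  have TVW: "sumset T V \<subseteq> Wsp k"
    using T V sumset_subset_Wsp unfolding is_subspace_def by auto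
  have card_TV: "card (sumset T V) = 2 ^ (sdim T + d)"
    using card_sumset[OF T V TV] card_subspace[OF T] less.prems(4) by (simp add: power_add)
  show ?case
  proof (cases "sumset T V = Wsp k")
    case True
    then have "k - sdim T = d" using card_TV card_Wsp by simp
    then show ?thesis using avoiding_eq_singleton[OF T TV True] by simp
  next
    case False
    then obtain w where w: "w \<in> Wsp k" "w \<notin> sumset T V" using TVW by auto
    have "card (sumset T V) < card (Wsp k)"
      using TVW False finite_Wsp by (simp add: psubset_card_mono)
    then have lt: "sdim T + d < k" using card_TV card_Wsp by simp
    have wV: "w \<notin> V" using w subset_sumset[OF T0] sumset_commute by blast
    have waT: "vadd w a \<notin> T" and waW: "vadd w a \<in> Wsp k" if "a \<in> V" for a
      using vadd_notin_sumset[OF V that w(2)] subset_sumset[OF V0] vadd_in_Wsp w(1) that VW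
      by auto
    have IH_V: "(\<Sum>S\<in>avoiding k T (adjoin V w). Kc (k - sdim S)) = Kc (Suc d)"
    proof (rule less.hyps)
      show "k - sdim T - Suc d < k - sdim T - d" using lt by simp
      show "T \<inter> adjoin V w = {vzero}"
        using adjoin_inter_eq_vzero[of V T w] TV w(2) sumset_commute by blast
      show "card (adjoin V w) = 2 ^ Suc d" using card_adjoin[OF V wV] less.prems(4) by simp
    qed (use T subspace_adjoin[OF V w(1)] in auto)
    have IH_T: "(\<Sum>S\<in>avoiding k (adjoin T (vadd w a)) V. Kc (k - sdim S)) = Kc d" if a: "a \<in> V" for a
    proof (rule less.hyps)
      show "k - sdim (adjoin T (vadd w a)) - d < k - sdim T - d"
        using lt sdim_adjoin[OF T waT[OF a]] by simp
      show "adjoin T (vadd w a) \<inter> V = {vzero}"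
        by (rule adjoin_inter_eq_vzero[OF TV vadd_notin_sumset[OF V a w(2)]])
    qed (use subspace_adjoin[OF T waW[OF a]] V less.prems(4,5) in auto)
    have disjoint: "avoiding k T (adjoin V w) \<inter> (\<Union>a\<in>V. avoiding k (adjoin T (vadd w a)) V) = {}"
      using avoiding_adjoin_disjoint[OF T0 _ wV] by blast
    have "(\<Sum>S\<in>avoiding k T V. Kc (k - sdim S))
        = (\<Sum>S\<in>avoiding k T (adjoin V w). Kc (k - sdim S))
          + (\<Sum>S\<in>(\<Union>a\<in>V. avoiding k (adjoin T (vadd w a)) V). Kc (k - sdim S))"
      unfolding avoiding_split[OF V, of T w]
      by (rule sum.union_disjoint[OF _ _ disjoint]) (use finite_avoiding finite_subspace[OF V] in auto)
    also have "(\<Sum>S\<in>(\<Union>a\<in>V. avoiding k (adjoin T (vadd w a)) V). Kc (k - sdim S))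
        = (\<Sum>a\<in>V. \<Sum>S\<in>avoiding k (adjoin T (vadd w a)) V. Kc (k - sdim S))"
      by (rule sum.UNION_disjoint)
        (use finite_avoiding finite_subspace[OF V] avoiding_adjoin_pairwise_disjoint[OF V T0] in auto)
    also have "(\<Sum>a\<in>V. \<Sum>S\<in>avoiding k (adjoin T (vadd w a)) V. Kc (k - sdim S)) = (\<Sum>a\<in>V. Kc d)"
      using IH_T by simp
    also note IH_V
    also have "Kc (Suc d) + (\<Sum>a\<in>V. Kc d) = Kc d"
      using Kc_Suc less.prems(4,5) by (simp add: algebra_simps)
    finally show ?thesis .
  qed
qed

lemma sum_Kc_subspaces_avoiding_vector:
  assumes T: "is_subspace k T" and v: "v \<in> Wsp k" "v \<noteq> vzero" "v \<notin> T"
  shows "(\<Sum>S\<in>{S. is_subspace k S \<and> T \<subseteq> S \<and> v \<notin> S}. Kc (k - sdim S)) = 1"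
proof -
  have V: "is_subspace k {vzero, v}" unfolding is_subspace_def using v vzero_in_Wsp by auto
  have "avoiding k T {vzero, v} = {S. is_subspace k S \<and> T \<subseteq> S \<and> v \<notin> S}"
    unfolding avoiding_def is_subspace_def using v(2) by auto
  moreover have "(\<Sum>S\<in>avoiding k T {vzero, v}. Kc (k - sdim S)) = Kc 1"
    by (rule sum_Kc_avoiding[OF T V]) (use T v in \<open>auto simp: is_subspace_def\<close>)
  ultimately show ?thesis by (simp add: Kc_def)
qed

definition avoid_coeff :: "nat \<Rightarrow> (nat \<Rightarrow> bool) \<Rightarrow> (nat \<Rightarrow> bool) set \<Rightarrow> real" where
  "avoid_coeff k v X = (\<Sum>S\<in>{S\<in>proper_subspaces k. X \<subseteq> S \<and> v \<notin> S}. Kc (k - sdim S))"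

text \<open>The subspaces containing X are those containing the span T of X, so avoid_coeff is
  0 if v lies in T and 1 otherwise.\<close>

lemma avoid_coeff_nonneg:
  assumes X: "X \<subseteq> Wsp k" and v: "v \<in> Wsp k" "v \<noteq> vzero"
  shows "avoid_coeff k v X \<ge> 0"
proof -
  define T where "T = \<Inter>{S. is_subspace k S \<and> X \<subseteq> S}"
  have T: "is_subspace k T"
    unfolding T_def is_subspace_def using subspace_Wsp X by (auto simp: is_subspace_def)
  have contains_iff: "X \<subseteq> S \<longleftrightarrow> T \<subseteq> S" if "is_subspace k S" for S
    using that unfolding T_def by blast
  show ?thesis
  proof (cases "v \<in> T")
    case True
    then have none: "{S\<in>proper_subspaces k. X \<subseteq> S \<and> v \<notin> S} = {}"
      using contains_iff unfolding proper_subspaces_def by blast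
    show ?thesis unfolding avoid_coeff_def none by simp
  next
    case False
    have "{S\<in>proper_subspaces k. X \<subseteq> S \<and> v \<notin> S} = {S. is_subspace k S \<and> T \<subseteq> S \<and> v \<notin> S}"
      using contains_iff v unfolding proper_subspaces_def by blast
    then have "avoid_coeff k v X = 1"
      unfolding avoid_coeff_def using sum_Kc_subspaces_avoiding_vector[OF T v False] by simp
    then show ?thesis by simp
  qed
qed

lemma avoid_coeff_empty:
  assumes v: "v \<in> Wsp k" "v \<noteq> vzero"
  shows "avoid_coeff k v {} = 1"
proof -
  have "{S\<in>proper_subspaces k. {} \<subseteq> S \<and> v \<notin> S} = {S. is_subspace k S \<and> {vzero} \<subseteq> S \<and> v \<notin> S}"
    using v unfolding proper_subspaces_def is_subspace_def by auto
  then show ?thesis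
    unfolding avoid_coeff_def using sum_Kc_subspaces_avoiding_vector[OF subspace_vzero v] v by simp
qed

lemma prod_diff_eq_sum_Pow:
  fixes x :: "'a \<Rightarrow> 'b::comm_ring_1"
  assumes I: "finite I" and S: "S \<subseteq> I"
  shows "(\<Prod>i\<in>I - S. x i) = (\<Sum>U\<in>Pow S. (\<Prod>i\<in>U. 1 - x i) * (\<Prod>i\<in>I - U. x i))"
proof -
  have fS: "finite S" using I S finite_subset by blast
  have split: "(\<Prod>i\<in>I - S. x i) * (\<Prod>i\<in>S - U. x i) = (\<Prod>i\<in>I - U. x i)" if "U \<subseteq> S" for U
  proof -
    have "I - U = (S - U) \<union> (I - S)" "(S - U) \<inter> (I - S) = {}" using that S by auto
    then show ?thesis using I fS by (simp add: prod.union_disjoint mult.commute)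
  qed
  have "(\<Prod>i\<in>I - S. x i) = (\<Prod>i\<in>I - S. x i) * (\<Prod>i\<in>S. (1 - x i) + x i)" by simp
  also have "\<dots> = (\<Prod>i\<in>I - S. x i) * (\<Sum>U\<in>Pow S. (\<Prod>i\<in>U. 1 - x i) * (\<Prod>i\<in>S - U. x i))"
    by (simp only: prod_add[OF fS])
  also have "\<dots> = (\<Sum>U\<in>Pow S. (\<Prod>i\<in>U. 1 - x i) * (\<Prod>i\<in>I - U. x i))"
    unfolding sum_distrib_left using split
    by (intro sum.cong) (auto simp: mult.left_commute[of "prod x (I - S)"])
  finally show ?thesis .
qed

lemma powr_loss_term_eq_sum:
  fixes q :: "nat \<Rightarrow> real" and n :: nat and \<epsilon> :: real
  assumes q: "q \<in> simplexC k" and e: "0 < \<epsilon>"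
  defines "x i \<equiv> \<epsilon> powr (real n * q i)"
  shows "\<epsilon> powr (real n * (1 - zeta k S q)) =
    (\<Sum>U\<in>Pow {..<2^k}. if nu k ` U \<subseteq> S then (\<Prod>i\<in>U. 1 - x i) * (\<Prod>i\<in>{..<2^k} - U. x i) else 0)"
proof -
  define I :: "nat set" where "I = {..<2^k}"
  define S' where "S' = {i. i < 2^k \<and> nu k i \<in> S}"
  have SI: "S' \<subseteq> I" and fI: "finite I" unfolding S'_def I_def by auto
  have "sum q I = 1" using q unfolding simplexC_def I_def by auto
  then have "1 - zeta k S q = sum q (I - S')"
    unfolding zeta_def S'_def[symmetric] using sum.subset_diff[OF SI fI, of q] by simp
  then have "\<epsilon> powr (real n * (1 - zeta k S q)) = (\<Prod>i\<in>I - S'. x i)"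
    unfolding x_def using e by (simp add: sum_distrib_left powr_sum)
  also have "\<dots> = (\<Sum>U\<in>Pow S'. (\<Prod>i\<in>U. 1 - x i) * (\<Prod>i\<in>I - U. x i))"
    by (rule prod_diff_eq_sum_Pow[OF fI SI])
  also have "Pow S' = {U\<in>Pow I. nu k ` U \<subseteq> S}" unfolding S'_def I_def by auto
  also have "(\<Sum>U\<in>{U\<in>Pow I. nu k ` U \<subseteq> S}. (\<Prod>i\<in>U. 1 - x i) * (\<Prod>i\<in>I - U. x i))
      = (\<Sum>U\<in>Pow I. if nu k ` U \<subseteq> S then (\<Prod>i\<in>U. 1 - x i) * (\<Prod>i\<in>I - U. x i) else 0)"
    using fI by (intro sum.inter_filter) simp
  finally show ?thesis unfolding I_def .
qed

definition loss_gain :: "nat \<Rightarrow> nat \<Rightarrow> real \<Rightarrow> (nat \<Rightarrow> real) \<Rightarrow> (nat \<Rightarrow> bool) \<Rightarrow> real" where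
  "loss_gain k n \<epsilon> q v =
     (\<Sum>S\<in>{S\<in>proper_subspaces k. v \<notin> S}. Kc (k - sdim S) * \<epsilon> powr (real n * (1 - zeta k S q)))"

lemma loss_gain_pos:
  fixes q :: "nat \<Rightarrow> real"
  assumes q: "q \<in> simplexC k" and e: "0 < \<epsilon>" "\<epsilon> \<le> 1" and v: "v \<in> Wsp k" "v \<noteq> vzero"
  shows "loss_gain k n \<epsilon> q v > 0"
proof -
  define I :: "nat set" where "I = {..<2^k}"
  define x where "x i = \<epsilon> powr (real n * q i)" for i
  define wt where "wt U = (\<Prod>i\<in>U. 1 - x i) * (\<Prod>i\<in>I - U. x i)" for U
  let ?PS = "{S\<in>proper_subspaces k. v \<notin> S}"
  have x: "0 < x i" "x i \<le> 1" if "i \<in> I" for i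
    using that q e unfolding x_def I_def simplexC_def by (auto intro: powr_le1)
  have "loss_gain k n \<epsilon> q v = (\<Sum>S\<in>?PS. \<Sum>U\<in>Pow I. if nu k ` U \<subseteq> S then Kc (k - sdim S) * wt U else 0)"
    unfolding loss_gain_def powr_loss_term_eq_sum[OF q e(1)] wt_def x_def I_def
    by (auto simp: sum_distrib_left intro!: sum.cong)
  also have "\<dots> = (\<Sum>U\<in>Pow I. \<Sum>S\<in>?PS. if nu k ` U \<subseteq> S then Kc (k - sdim S) * wt U else 0)"
    by (rule sum.swap)
  also have "\<dots> = (\<Sum>U\<in>Pow I. wt U * avoid_coeff k v (nu k ` U))"
  proof (rule sum.cong[OF refl])
    fix U
    have "{S \<in> ?PS. nu k ` U \<subseteq> S} = {S\<in>proper_subspaces k. nu k ` U \<subseteq> S \<and> v \<notin> S}" by auto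
    then show "(\<Sum>S\<in>?PS. if nu k ` U \<subseteq> S then Kc (k - sdim S) * wt U else 0) = wt U * avoid_coeff k v (nu k ` U)"
      unfolding avoid_coeff_def using finite_proper_subspaces
      by (simp add: sum.inter_filter[symmetric] sum_distrib_left mult.commute)
  qed
  also have "\<dots> \<ge> wt {} * avoid_coeff k v (nu k ` {})"
  proof (rule member_le_sum)
    fix U assume "U \<in> Pow I - {{}}"
    then have "wt U \<ge> 0" unfolding wt_def using x by (intro mult_nonneg_nonneg prod_nonneg) force+
    moreover have "avoid_coeff k v (nu k ` U) \<ge> 0"
      using avoid_coeff_nonneg[OF _ v] nu_in_Wsp by blast
    ultimately show "0 \<le> wt U * avoid_coeff k v (nu k ` U)" by simp
  qed (auto simp: I_def)
  moreover have "wt {} > 0" unfolding wt_def using x by (simp add: prod_pos)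
  ultimately show ?thesis using avoid_coeff_empty[OF v] by simp
qed

lemma sum_shift_mass:
  fixes q :: "nat \<Rightarrow> real"
  assumes "finite A" "i \<noteq> j"
  shows "sum (q(i := q i - t, j := q j + t)) A
       = sum q A - (if i \<in> A then t else 0) + (if j \<in> A then t else 0)"
proof -
  have "q(i := q i - t, j := q j + t) = (\<lambda>l. q l + ((if l = j then t else 0) - (if l = i then t else 0)))"
    using assms(2) by auto
  then show ?thesis using assms(1) by (simp add: sum.distrib sum_subtractf)
qed

lemma zeta_shift_mass:
  assumes "vzero \<in> S" "j \<noteq> 0" "j < 2 ^ k"
  shows "zeta k S (q(0 := q 0 - t, j := q j + t)) = zeta k S q - t + (if nu k j \<in> S then t else 0)"
  unfolding zeta_def using assms by (subst sum_shift_mass) (auto simp: nu_0)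

lemma loss_eq_sum_proper_subspaces:
  "loss k n \<epsilon> q = real n * (1 - \<epsilon>) - real k
     + (\<Sum>S\<in>proper_subspaces k. Kc (k - sdim S) * \<epsilon> powr (real n * (1 - zeta k S q)))"
  unfolding loss_def sum_Kc_Xi_eq_sum_proper_subspaces ..

lemma loss_shift_mass:
  assumes j: "j \<noteq> 0" "j < 2 ^ k"
  shows "loss k n \<epsilon> (q(0 := q 0 - t, j := q j + t))
       = loss k n \<epsilon> q + (\<epsilon> powr (real n * t) - 1) * loss_gain k n \<epsilon> q (nu k j)"
proof -
  define q' where "q' = q(0 := q 0 - t, j := q j + t)"
  define f where "f p S = Kc (k - sdim S) * \<epsilon> powr (real n * (1 - zeta k S p))" for p S
  have shift: "f q' S = f q S + (if nu k j \<notin> S then (\<epsilon> powr (real n * t) - 1) * f q S else 0)"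
    if "S \<in> proper_subspaces k" for S
  proof -
    have "vzero \<in> S" using that unfolding proper_subspaces_def is_subspace_def by blast
    then have z: "zeta k S q' = zeta k S q - t + (if nu k j \<in> S then t else 0)"
      unfolding q'_def using zeta_shift_mass j by blast
    show ?thesis
    proof (cases "nu k j \<in> S")
      case False
      then have "real n * (1 - zeta k S q') = real n * (1 - zeta k S q) + real n * t"
        unfolding z by (simp add: algebra_simps)
      then have "\<epsilon> powr (real n * (1 - zeta k S q'))
          = \<epsilon> powr (real n * (1 - zeta k S q)) * \<epsilon> powr (real n * t)"
        by (simp only: powr_add)
      then show ?thesis unfolding f_def using False by (simp add: algebra_simps)
    qed (simp add: f_def z)
  qed
  have "(\<Sum>S\<in>proper_subspaces k. f q' S) = (\<Sum>S\<in>proper_subspaces k. f q S)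
      + (\<Sum>S\<in>proper_subspaces k. if nu k j \<notin> S then (\<epsilon> powr (real n * t) - 1) * f q S else 0)"
    by (subst sum.cong[OF refl shift]) (simp_all add: sum.distrib)
  also have "(\<Sum>S\<in>proper_subspaces k. if nu k j \<notin> S then (\<epsilon> powr (real n * t) - 1) * f q S else 0)
      = (\<epsilon> powr (real n * t) - 1) * loss_gain k n \<epsilon> q (nu k j)"
    unfolding loss_gain_def f_def[symmetric] sum_distrib_left
    using finite_proper_subspaces by (simp add: sum.inter_filter)
  finally have "(\<Sum>S\<in>proper_subspaces k. f q' S)
      = (\<Sum>S\<in>proper_subspaces k. f q S) + (\<epsilon> powr (real n * t) - 1) * loss_gain k n \<epsilon> q (nu k j)" .
  then show ?thesis
    unfolding q'_def[symmetric] loss_eq_sum_proper_subspaces f_def by simp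
qed

lemma shift_mass_in_simplexC:
  assumes q: "q \<in> simplexC k" and t: "0 \<le> t" "t \<le> q 0" and j: "j \<noteq> 0" "j < 2 ^ k"
  shows "q(0 := q 0 - t, j := q j + t) \<in> simplexC k"
proof -
  have "0 < (2::nat) ^ k" by simp
  then show ?thesis
    using q t j sum_shift_mass[of "{..<2^k}" 0 j q t] unfolding simplexC_def by auto
qed

theorem theorem2:
  fixes \<kappa> n :: nat and \<epsilon> :: real and q :: "nat \<Rightarrow> real"
  assumes "\<kappa> \<ge> 1" and "n \<ge> 1" and "0 < \<epsilon>" and "\<epsilon> < 1"
    and "local_min_on \<kappa> (loss \<kappa> n \<epsilon>) (simplexC \<kappa>) q"
  shows "q 0 = 0"
proof (rule ccontr)
  assume "q 0 \<noteq> 0"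
  obtain r where r: "r > 0" and qC: "q \<in> simplexC \<kappa>"
    and min: "\<And>q'. q' \<in> simplexC \<kappa> \<Longrightarrow> \<forall>i<2^\<kappa>. \<bar>q' i - q i\<bar> < r \<Longrightarrow> loss \<kappa> n \<epsilon> q \<le> loss \<kappa> n \<epsilon> q'"
    using assms(5) unfolding local_min_on_def by blast
  have one: "(1::nat) < 2 ^ \<kappa>" using assms(1) by (intro one_less_power) auto
  then have "q 0 > 0" using qC \<open>q 0 \<noteq> 0\<close> unfolding simplexC_def by force
  define t where "t = min (q 0) (r / 2)"
  have t: "0 < t" "t \<le> q 0" "t < r" using \<open>q 0 > 0\<close> r unfolding t_def by auto
  define q' where "q' = q(0 := q 0 - t, 1 := q 1 + t)"
  have "q' \<in> simplexC \<kappa>" unfolding q'_def using shift_mass_in_simplexC qC t one by simp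
  moreover have "\<forall>i<2^\<kappa>. \<bar>q' i - q i\<bar> < r" unfolding q'_def using t by auto
  ultimately have "loss \<kappa> n \<epsilon> q \<le> loss \<kappa> n \<epsilon> q'" by (rule min)
  moreover have "(\<epsilon> powr (real n * t) - 1) * loss_gain \<kappa> n \<epsilon> q (nu \<kappa> 1) < 0"
  proof (rule mult_neg_pos)
    show "\<epsilon> powr (real n * t) - 1 < 0"
      using powr_less_mono2[of "real n * t" \<epsilon> 1] assms(2-4) t by simp
    show "loss_gain \<kappa> n \<epsilon> q (nu \<kappa> 1) > 0"
      using loss_gain_pos[OF qC assms(3)] assms(4) nu_in_Wsp nu_eq_vzero_iff[OF one] by simp
  qed
  ultimately show False
    using loss_shift_mass[of 1 \<kappa> n \<epsilon> q t] one unfolding q'_def by simp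
qed

end
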